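(* Let $n$ be a positive integer and let $a,b,c,\alpha$ be positive integers such that ${\alpha+n\choose n}+a=b+c$ and $a,b,c<{\alpha+n\choose n}$. Then \[{\alpha+n\choose n}^{<n>}+a^{<n>}\leq b^{<n>}+c^{<n>}.\] Moreover, if ${\alpha+n\choose n}^{<n>}+a^{<n>}=b^{<n>}+c^{<n>}$, then \[\Big\{{\alpha+n\choose n}^{<n>}\Big\}^{<n>}+\{a^{<n>}\}^{<n>}=\{b^{<n>}\}^{<n>}+\{c^{<n>}\}^{<n>}.\]
   Context: For positive integers $n,h$, $h$ can be written uniquely in the form ($n$th binomial representation) $h={h(n)+n\choose n}+{h(n-1)+n-1\choose n-1}+\dots+{h(i)+i\choose i}$ with $h(n)\geq h(n-1)\geq\dots\geq h(i)\geq 0$ and $i\geq 1$. Using this representation define $h^{<n>}={h(n)+n+1\choose n}+\dots+{h(i)+i+1\choose i}$. Iterates such as $\{h^{<n>}\}^{<n>}$ mean applying this operation (with the $n$th binomial representation of $h^{<n>}$) again. *)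

theory Defs
  imports Main
begin

definition binrep :: "nat \<Rightarrow> nat \<Rightarrow> nat \<Rightarrow> (nat \<Rightarrow> nat) \<Rightarrow> bool" where
  "binrep n h i f \<longleftrightarrow> 1 \<le> i \<and> i \<le> n \<and> (\<forall>j\<in>{i..<n}. f j \<le> f (Suc j)) \<and>
     h = (\<Sum>j=i..n. (f j + j) choose j)"

definition mac_up :: "nat \<Rightarrow> nat \<Rightarrow> nat" where
  "mac_up n h = (THE v. \<exists>i f. binrep n h i f \<and> v = (\<Sum>j=i..n. (f j + j + 1) choose j))"

end

(*
  Write h = C(m_n, n) + ... + C(m_i, i) in n-th binomial representation. The hockey-stick
  identity C(m + 1, j) = sum_{k <= j} C(m - k, j - k) splits h^<n> into layers
  L_k(h) = sum_{j >= k} C(m_j - k, j - k), with L_0(h) = h, and likewise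
  {h^<n>}^<n> = sum_k (k + 1) L_k(h). Hence both claims follow from
  L_k(N) + L_k(a) <= L_k(b) + L_k(c) for every k, where N = C(alpha + n, n): equality of the
  sums forces equality in every layer.

  For 1 <= k <= n and z <= N the layer L_k(N - z) is complementary to the colayer
  V_k(z) = sum_j C(m'_j - k, j), taken over the alpha-th binomial representation
  z = sum_j C(m'_j, j): L_k(N - z) + V_k(z) = C(alpha + n - k, n - k). So the layer inequality is the
  superadditivity of V_k on [0, N]. It is proved together with the subadditivity of L_k on
  [0, N] by induction on alpha + n: splitting off the leading binomial coefficient of the larger
  summand either lowers the degree n (resp. the order alpha), or, when the sum passes the next
  binomial coefficient, reduces via the duality to the other statement for a smaller N.
*)
theory Submission
  imports Defs
begin

declare binomial_Suc_Suc [simp del]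

section \<open>Binomial coefficients\<close>

lemma binomial_add_symmetric: "(a + b) choose a = (a + b) choose b"
  using binomial_symmetric[of a "a + b"] by simp

lemma binomial_less_imp_less: "m choose p < n choose p \<Longrightarrow> m < n"
  using binomial_right_mono leD not_le_imp_less by metis

lemma Suc_le_binomial_add: "Suc m \<le> (m + Suc p) choose Suc p"
proof (induction m)
  case (Suc m)
  have "(Suc m + Suc p) choose Suc p = ((m + Suc p) choose p) + ((m + Suc p) choose Suc p)"
    by (simp add: binomial_Suc_Suc)
  moreover have "0 < (m + Suc p) choose p" by simp
  ultimately show ?case using Suc by linarith
qed simp

lemma binomial_add_plus_choose_Suc: "((a + t) choose t) + ((a + t) choose Suc a) = (Suc a + t) choose t"
proof (cases t)
  case (Suc t')
  have "(a + t) choose Suc a = (a + t) choose t'"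
    using binomial_add_symmetric[of "Suc a" t'] Suc by simp
  then show ?thesis using Suc by (simp add: binomial_Suc_Suc)
qed simp

lemma sum_Suc_mult_choose_diagonal:
  assumes "j \<le> m"
  shows "(\<Sum>k\<le>j. Suc k * ((m - k) choose (j - k))) = Suc (Suc m) choose j"
  using assms
proof (induction j arbitrary: m)
  case (Suc j)
  then obtain m' where m: "m = Suc m'" and "j \<le> m'" by (cases m) auto
  have "(\<Sum>k\<le>Suc j. Suc k * ((m - k) choose (Suc j - k)))
      = (m choose Suc j) + (\<Sum>k\<le>j. Suc (Suc k) * ((m' - k) choose (j - k)))"
    by (simp add: sum.atMost_Suc_shift m del: sum.atMost_Suc)
  also have "\<dots> = (m choose Suc j) + ((Suc (Suc m') choose j) + (Suc m' choose j))"
    using Suc.IH[OF \<open>j \<le> m'\<close>] sum_choose_diagonal[OF \<open>j \<le> m'\<close>] by (simp add: sum.distrib)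
  also have "\<dots> = Suc (Suc m) choose Suc j"
    by (simp add: m binomial_Suc_Suc)
  finally show ?case .
qed simp

section \<open>Greedy binomial representations\<close>

definition macaulay_top :: "nat \<Rightarrow> nat \<Rightarrow> nat" where
  "macaulay_top p h = (LEAST m. h < Suc m choose p)"

lemma macaulay_top_bounds:
  assumes "0 < p"
  shows "macaulay_top p h choose p \<le> h" and "h < Suc (macaulay_top p h) choose p"
proof -
  obtain q where q: "p = Suc q" using assms by (cases p) auto
  have "h < Suc (h + q) choose p"
    using Suc_le_binomial_add[of h q] q by simp
  then show "h < Suc (macaulay_top p h) choose p"
    unfolding macaulay_top_def by (rule LeastI)
  show "macaulay_top p h choose p \<le> h"
  proof (cases "macaulay_top p h")
    case (Suc m)
    then have "\<not> h < Suc m choose p"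
      unfolding macaulay_top_def by (metis lessI not_less_Least)
    then show ?thesis using Suc by simp
  qed (simp add: q)
qed

lemma macaulay_top_eqI:
  assumes "m choose p \<le> h" and "h < Suc m choose p"
  shows "macaulay_top p h = m"
proof (rule antisym)
  show "macaulay_top p h \<le> m"
    unfolding macaulay_top_def by (rule Least_le) (rule assms(2))
  have "h < Suc (macaulay_top p h) choose p"
    unfolding macaulay_top_def by (rule LeastI[of _ m]) (rule assms(2))
  then have "\<not> Suc (macaulay_top p h) \<le> m"
    using assms(1) binomial_right_mono by (metis leD le_trans)
  then show "m \<le> macaulay_top p h" by simp
qed

lemma binomial_decomposition:
  assumes "0 < h"
  obtains m r where "Suc p \<le> m" and "r < m choose p" and "h = (m choose Suc p) + r"
proof
  let ?m = "macaulay_top (Suc p) h"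
  have low: "?m choose Suc p \<le> h" and up: "h < Suc ?m choose Suc p"
    using macaulay_top_bounds[of "Suc p" h] by auto
  show "h - (?m choose Suc p) < ?m choose p" "h = (?m choose Suc p) + (h - (?m choose Suc p))"
    using low up by (auto simp: binomial_Suc_Suc)
  show "Suc p \<le> ?m"
  proof (rule ccontr)
    assume "\<not> Suc p \<le> ?m"
    then have "Suc ?m choose Suc p \<le> 1"
      by (cases "Suc ?m = Suc p") (simp_all add: binomial_eq_0)
    then show False using up assms by simp
  qed
qed

lemma binomial_decomposition_pos:
  assumes "1 < y"
  obtains m r where "Suc p \<le> m" and "0 < r" and "r \<le> m choose p" and "y = (m choose Suc p) + r"
proof -
  obtain m r where m: "Suc p \<le> m" and r: "r < m choose p" and y: "y = (m choose Suc p) + r"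
    using binomial_decomposition[of y p] assms by auto
  show ?thesis
  proof (cases "r = 0")
    case True
    then have "m \<noteq> Suc p" using assms y by auto
    then obtain m' where "m = Suc m'" and "Suc p \<le> m'" using m by (cases m) auto
    then show ?thesis
      using that[of m' "m' choose p"] y True by (simp add: binomial_Suc_Suc)
  qed (use that m r y in simp)
qed

text \<open>The sum of \<open>\<phi> m\<^sub>j j\<close> over the \<open>p\<close>-th binomial representation
  \<open>h = (m\<^sub>p choose p) + \<dots> + (m\<^sub>i choose i)\<close>.\<close>
fun binrep_sum :: "(nat \<Rightarrow> nat \<Rightarrow> nat) \<Rightarrow> nat \<Rightarrow> nat \<Rightarrow> nat" where
  "binrep_sum \<phi> 0 h = 0"
| "binrep_sum \<phi> (Suc p) h = (if h = 0 then 0 else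
     \<phi> (macaulay_top (Suc p) h) (Suc p)
       + binrep_sum \<phi> p (h - (macaulay_top (Suc p) h choose Suc p)))"

declare binrep_sum.simps(2) [simp del]

lemma binrep_sum_0_right [simp]: "binrep_sum \<phi> p 0 = 0"
  by (cases p) (simp_all add: binrep_sum.simps(2))

lemma binrep_sum_step [simp]:
  assumes "Suc p \<le> m" and "r < m choose p"
  shows "binrep_sum \<phi> (Suc p) ((m choose Suc p) + r) = \<phi> m (Suc p) + binrep_sum \<phi> p r"
proof -
  have "macaulay_top (Suc p) ((m choose Suc p) + r) = m"
    by (rule macaulay_top_eqI) (use assms(2) in \<open>simp_all add: binomial_Suc_Suc\<close>)
  then show ?thesis using assms(1) by (simp add: binrep_sum.simps(2))
qed

lemma binrep_sum_induct [case_names degree_0 value_0 step]: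
  assumes "\<And>h. P 0 h" and "\<And>p. P (Suc p) 0"
    and "\<And>p m r. Suc p \<le> m \<Longrightarrow> r < m choose p \<Longrightarrow> P p r \<Longrightarrow> P (Suc p) ((m choose Suc p) + r)"
  shows "P p h"
proof (induction p arbitrary: h)
  case (Suc p)
  show ?case
  proof (cases "h = 0")
    case False
    then obtain m r where "Suc p \<le> m" "r < m choose p" "h = (m choose Suc p) + r"
      using binomial_decomposition by blast
    then show ?thesis using assms(3) Suc by blast
  qed (simp add: assms(2))
qed (rule assms(1))

lemma binrep_SucE:
  assumes "binrep (Suc n) h i f"
  obtains "i = Suc n" and "h = (f (Suc n) + Suc n) choose Suc n"
  | h' where "i \<le> n" and "binrep n h' i f" and "f n \<le> f (Suc n)"
    and "h = ((f (Suc n) + Suc n) choose Suc n) + h'"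
proof (cases "i = Suc n")
  case True
  then show ?thesis using assms that(1) unfolding binrep_def by simp
next
  case False
  then have "i \<le> n" using assms unfolding binrep_def by simp
  then show ?thesis using assms that(2)[of "\<Sum>j=i..n. (f j + j) choose j"]
    unfolding binrep_def by (simp add: add.commute)
qed

lemma binrep_less:
  assumes "binrep n h i f"
  shows "h < Suc (f n + n) choose n"
  using assms
proof (induction n arbitrary: h)
  case 0
  then show ?case unfolding binrep_def by auto
next
  case (Suc n)
  from Suc.prems show ?case
  proof (cases rule: binrep_SucE)
    case (2 h')
    have "h' < Suc (f n + n) choose n" using Suc.IH 2 by blast
    also have "\<dots> \<le> (f (Suc n) + Suc n) choose n"
      using 2 by (intro binomial_right_mono) simp
    finally show ?thesis using 2 by (simp add: binomial_Suc_Suc)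
  qed (simp add: binomial_Suc_Suc)
qed

lemma binrep_sum_binrep:
  assumes "binrep n h i f"
  shows "binrep_sum \<phi> n h = (\<Sum>j=i..n. \<phi> (f j + j) j)"
  using assms
proof (induction n arbitrary: h)
  case 0
  then show ?case unfolding binrep_def by auto
next
  case (Suc n)
  from Suc.prems show ?case
  proof (cases rule: binrep_SucE)
    case 1
    then show ?thesis using binrep_sum_step[of n "f (Suc n) + Suc n" 0] by simp
  next
    case (2 h')
    have "h' < Suc (f n + n) choose n" using binrep_less 2 by blast
    also have "\<dots> \<le> (f (Suc n) + Suc n) choose n"
      using 2 by (intro binomial_right_mono) simp
    finally have "binrep_sum \<phi> (Suc n) h = \<phi> (f (Suc n) + Suc n) (Suc n) + binrep_sum \<phi> n h'"
      using 2 by simp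
    then show ?thesis using Suc.IH 2 by simp
  qed
qed

lemma binrep_top_le:
  assumes "binrep n h i f"
  shows "(f n + n) choose n \<le> h"
  using assms member_le_sum[of n "{i..n}" "\<lambda>j. (f j + j) choose j"] unfolding binrep_def by simp

lemma binrep_exists:
  assumes "0 < n" and "0 < h"
  shows "\<exists>i f. binrep n h i f"
  using assms
proof (induction n h rule: binrep_sum_induct)
  case (step p m r)
  show ?case
  proof (cases "r = 0")
    case True
    have "binrep (Suc p) ((m choose Suc p) + r) (Suc p) (\<lambda>_. m - Suc p)"
      using step.hyps True unfolding binrep_def by simp
    then show ?thesis by blast
  next
    case False
    then have "0 < p" using step.hyps(2) by (cases p) simp_all
    then obtain i f where f: "binrep p r i f" using step.IH False by blast
    have "(f p + p) choose p < m choose p"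
      using binrep_top_le[OF f] step.hyps(2) by simp
    then have "f p + p < m" by (rule binomial_less_imp_less)
    have "binrep (Suc p) ((m choose Suc p) + r) i (f(Suc p := m - Suc p))"
      using f \<open>f p + p < m\<close> step.hyps(1)
      unfolding binrep_def by (auto simp: less_Suc_eq)
    then show ?thesis by blast
  qed
qed simp_all

lemma mac_up_eq_binrep_sum:
  assumes "0 < n" and "0 < h"
  shows "mac_up n h = binrep_sum (\<lambda>m j. Suc m choose j) n h"
  unfolding mac_up_def
proof (rule the_equality)
  obtain i f where "binrep n h i f" using binrep_exists assms by blast
  then show "\<exists>i f. binrep n h i f \<and> binrep_sum (\<lambda>m j. Suc m choose j) n h
      = (\<Sum>j=i..n. (f j + j + 1) choose j)"
    using binrep_sum_binrep by fastforce
qed (auto simp: binrep_sum_binrep)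

lemma binrep_sum_cong:
  assumes "\<And>m j. 0 < j \<Longrightarrow> j \<le> p \<Longrightarrow> j \<le> m \<Longrightarrow> \<phi> m j = \<psi> m j"
  shows "binrep_sum \<phi> p h = binrep_sum \<psi> p h"
  using assms by (induction p h rule: binrep_sum_induct) simp_all

lemma binrep_sum_eq_0:
  assumes "\<And>m j. 0 < j \<Longrightarrow> j \<le> p \<Longrightarrow> j \<le> m \<Longrightarrow> \<phi> m j = 0"
  shows "binrep_sum \<phi> p h = 0"
  using assms by (induction p h rule: binrep_sum_induct) simp_all

lemma binrep_sum_sum:
  "binrep_sum (\<lambda>m j. \<Sum>k\<in>K. \<phi> k m j) p h = (\<Sum>k\<in>K. binrep_sum (\<phi> k) p h)"
  by (induction p h rule: binrep_sum_induct) (simp_all add: sum.distrib)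

lemma binrep_sum_mult:
  "binrep_sum (\<lambda>m j. c * \<phi> m j) p h = c * binrep_sum \<phi> p h"
  by (induction p h rule: binrep_sum_induct) (simp_all add: distrib_left)

lemma binrep_sum_choose:
  assumes "0 < p"
  shows "binrep_sum (\<lambda>m j. m choose j) p h = h"
  using assms
proof (induction p h rule: binrep_sum_induct)
  case (step p m r)
  then show ?case using binrep_sum_step[of p m r "\<lambda>m j. m choose j"] by (cases p) simp_all
qed simp_all

lemma binrep_sum_Suc_choose_less:
  assumes "r < m choose p"
  shows "binrep_sum (\<lambda>m j. Suc m choose j) p r < Suc m choose p"
  using assms
proof (induction p r arbitrary: m rule: binrep_sum_induct)
  case (step p m' r)
  have "m' choose Suc p < m choose Suc p" using step.prems by simp
  then have "Suc m' \<le> m" by (simp add: Suc_le_eq binomial_less_imp_less)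
  have "binrep_sum (\<lambda>m j. Suc m choose j) (Suc p) ((m' choose Suc p) + r)
      = (Suc m' choose Suc p) + binrep_sum (\<lambda>m j. Suc m choose j) p r"
    using step.hyps by simp
  also have "\<dots> < (Suc m' choose Suc p) + (Suc m' choose p)"
    using step.IH step.hyps by simp
  also have "\<dots> = Suc (Suc m') choose Suc p" by (simp add: binomial_Suc_Suc)
  also have "\<dots> \<le> Suc m choose Suc p"
    using \<open>Suc m' \<le> m\<close> by (intro binomial_right_mono) simp
  finally show ?case .
qed simp_all

lemma binrep_sum_Suc_choose:
  "binrep_sum \<phi> p (binrep_sum (\<lambda>m j. Suc m choose j) p h) = binrep_sum (\<lambda>m. \<phi> (Suc m)) p h"
proof (induction p h rule: binrep_sum_induct)
  case (step p m r)
  have "binrep_sum (\<lambda>m j. Suc m choose j) p r < Suc m choose p"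
    using binrep_sum_Suc_choose_less step.hyps by blast
  then show ?case using step by simp
qed simp_all

section \<open>Layers and colayers\<close>

definition layer :: "nat \<Rightarrow> nat \<Rightarrow> nat \<Rightarrow> nat" where
  "layer k n h = binrep_sum (\<lambda>m j. if k \<le> j then (m - k) choose (j - k) else 0) n h"

definition colayer :: "nat \<Rightarrow> nat \<Rightarrow> nat \<Rightarrow> nat" where
  "colayer k p h = binrep_sum (\<lambda>m j. (m - k) choose j) p h"

lemma layer_0_right [simp]: "layer k n 0 = 0"
  and colayer_0_right [simp]: "colayer k p 0 = 0"
  by (simp_all add: layer_def colayer_def)

lemma sum_layer_weights:
  assumes "j \<le> n"
  shows "(\<Sum>k\<le>n. c k * (if k \<le> j then (m - k) choose (j - k) else 0))
    = (\<Sum>k\<le>j. c k * ((m - k) choose (j - k)))"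
proof -
  have "{k\<in>{..n}. k \<le> j} = {..j}" using assms by auto
  then show ?thesis
    using sum.inter_filter[of "{..n}" "\<lambda>k. c k * ((m - k) choose (j - k))" "\<lambda>k. k \<le> j"]
    by (simp add: if_distrib cong: if_cong)
qed

lemma binrep_sum_Suc_choose_eq_sum_layer:
  "binrep_sum (\<lambda>m j. Suc m choose j) n h = (\<Sum>k\<le>n. layer k n h)"
proof -
  have "binrep_sum (\<lambda>m j. Suc m choose j) n h
      = binrep_sum (\<lambda>m j. \<Sum>k\<le>n. if k \<le> j then (m - k) choose (j - k) else 0) n h"
    by (rule binrep_sum_cong)
      (use sum_layer_weights[of _ n "\<lambda>_. 1"] sum_choose_diagonal in simp)
  then show ?thesis unfolding layer_def by (simp add: binrep_sum_sum)
qed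

lemma binrep_sum_Suc_choose_twice_eq_sum_layer:
  "binrep_sum (\<lambda>m j. Suc m choose j) n (binrep_sum (\<lambda>m j. Suc m choose j) n h)
    = (\<Sum>k\<le>n. Suc k * layer k n h)"
proof -
  have "binrep_sum (\<lambda>m j. Suc m choose j) n (binrep_sum (\<lambda>m j. Suc m choose j) n h)
      = binrep_sum (\<lambda>m j. Suc (Suc m) choose j) n h"
    by (rule binrep_sum_Suc_choose)
  also have "\<dots> = binrep_sum
      (\<lambda>m j. \<Sum>k\<le>n. Suc k * (if k \<le> j then (m - k) choose (j - k) else 0)) n h"
    by (rule binrep_sum_cong)
      (use sum_layer_weights[of _ n Suc] sum_Suc_mult_choose_diagonal in simp)
  also have "\<dots> = (\<Sum>k\<le>n. Suc k * layer k n h)"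
    unfolding layer_def binrep_sum_sum binrep_sum_mult ..
  finally show ?thesis .
qed

lemma layer_0:
  assumes "0 < n"
  shows "layer 0 n h = h"
proof -
  have "layer 0 n h = binrep_sum (\<lambda>m j. m choose j) n h"
    unfolding layer_def by (rule binrep_sum_cong) simp
  then show ?thesis using binrep_sum_choose assms by simp
qed

lemma layer_eq_0: "n < k \<Longrightarrow> layer k n h = 0"
  unfolding layer_def by (rule binrep_sum_eq_0) simp

lemma mac_up_eq_sum_layer:
  assumes "0 < n" and "0 < h"
  shows "mac_up n h = (\<Sum>k\<le>n. layer k n h)"
  using assms by (simp add: mac_up_eq_binrep_sum binrep_sum_Suc_choose_eq_sum_layer)

lemma le_mac_up:
  assumes "0 < n" and "0 < h"
  shows "h \<le> mac_up n h"
  using member_le_sum[of 0 "{..n}" "\<lambda>k. layer k n h"] assms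
  by (simp add: mac_up_eq_sum_layer layer_0)

lemma mac_up_mac_up_eq_sum_layer:
  assumes "0 < n" and "0 < h"
  shows "mac_up n (mac_up n h) = (\<Sum>k\<le>n. Suc k * layer k n h)"
proof -
  have "0 < mac_up n h" using le_mac_up assms by (meson order_less_le_trans)
  then show ?thesis using assms
    by (simp add: mac_up_eq_binrep_sum binrep_sum_Suc_choose_twice_eq_sum_layer)
qed

lemma layer_choose:
  assumes "0 < k" and "p \<le> m"
  shows "layer k p (m choose p) = (if k \<le> p then (m - k) choose (p - k) else 0)"
proof (cases p)
  case (Suc q)
  then show ?thesis
    using assms binrep_sum_step[of q m 0] unfolding layer_def by simp
qed (simp add: assms layer_def)

lemma colayer_choose:
  assumes "0 < p" and "p \<le> m"
  shows "colayer k p (m choose p) = (m - k) choose p"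
  using assms binrep_sum_step[of "p - 1" m 0] unfolding colayer_def by simp

lemma layer_split:
  assumes "0 < k" and "Suc p \<le> m" and "r \<le> m choose p"
  shows "layer k (Suc p) ((m choose Suc p) + r)
    = (if k \<le> Suc p then (m - k) choose (Suc p - k) else 0) + layer k p r"
proof (cases "r = m choose p")
  case True
  have "(m choose Suc p) + r = Suc m choose Suc p" using True by (simp add: binomial_Suc_Suc)
  moreover have "(if k \<le> Suc p then (Suc m - k) choose (Suc p - k) else 0)
      = (if k \<le> Suc p then (m - k) choose (Suc p - k) else 0)
        + (if k \<le> p then (m - k) choose (p - k) else 0)"
    using assms by (auto simp: Suc_diff_le binomial_Suc_Suc le_Suc_eq)
  ultimately show ?thesis using True assms by (simp add: layer_choose)
next
  case False
  then show ?thesis using assms unfolding layer_def by simp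
qed

lemma colayer_split:
  assumes "0 < p" and "Suc p \<le> m" and "r \<le> m choose p"
  shows "colayer k (Suc p) ((m choose Suc p) + r) = ((m - k) choose Suc p) + colayer k p r"
proof (cases "r = m choose p")
  case True
  have "(m choose Suc p) + r = Suc m choose Suc p" using True by (simp add: binomial_Suc_Suc)
  moreover have "(Suc m - k) choose Suc p = ((m - k) choose Suc p) + ((m - k) choose p)"
    using assms by (cases "k \<le> m") (simp_all add: Suc_diff_le binomial_Suc_Suc)
  ultimately show ?thesis using True assms by (simp add: colayer_choose)
next
  case False
  then show ?thesis using assms unfolding colayer_def by simp
qed

lemma colayer_eq_0:
  assumes "z < (p + k) choose p"
  shows "colayer k p z = 0"
  using assms unfolding colayer_def
proof (induction p z rule: binrep_sum_induct)
  case (step p m r)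
  have "m choose Suc p < (Suc p + k) choose Suc p" using step.prems by simp
  then have "m < Suc p + k" by (rule binomial_less_imp_less)
  then have "r < (p + k) choose p"
    using step.hyps(2) binomial_right_mono[of m "p + k" p] by simp
  then show ?case using step.IH step.hyps \<open>m < Suc p + k\<close> by simp
qed simp_all

lemma colayer_1: "colayer k (Suc 0) h = h - k"
  using binrep_sum_step[of 0 h 0 "\<lambda>m j. (m - k) choose j"]
  unfolding colayer_def by (cases h) simp_all

lemma layer_colayer_duality_low:
  assumes "0 < k" and "k \<le> Suc n" and "0 < \<alpha>" and z: "z \<le> (\<alpha> + n) choose n"
    and IH: "k \<le> n \<Longrightarrow>
      layer k n (((\<alpha> + n) choose n) - z) + colayer k \<alpha> z = (\<alpha> + n - k) choose (n - k)"
  shows "layer k (Suc n) (((\<alpha> + Suc n) choose Suc n) - z) + colayer k \<alpha> z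
    = (\<alpha> + Suc n - k) choose (Suc n - k)"
proof -
  have "((\<alpha> + Suc n) choose Suc n) - z = ((\<alpha> + n) choose Suc n) + (((\<alpha> + n) choose n) - z)"
    using z by (simp add: binomial_Suc_Suc)
  also have "layer k (Suc n) \<dots>
      = ((\<alpha> + n - k) choose (Suc n - k)) + layer k n (((\<alpha> + n) choose n) - z)"
    using assms by (subst layer_split) simp_all
  finally have split: "layer k (Suc n) (((\<alpha> + Suc n) choose Suc n) - z)
      = ((\<alpha> + n - k) choose (Suc n - k)) + layer k n (((\<alpha> + n) choose n) - z)" .
  show ?thesis
  proof (cases "k \<le> n")
    case True
    have "Suc n - k = Suc (n - k)" and "\<alpha> + Suc n - k = Suc (\<alpha> + n - k)" using True by auto
    then show ?thesis using split IH True by (simp add: binomial_Suc_Suc)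
  next
    case False
    then have k: "k = Suc n" using assms(2) by simp
    have "(\<alpha> + n) choose n < ((\<alpha> + n) choose n) + ((\<alpha> + n) choose Suc n)"
      using assms(3) by simp
    also have "\<dots> = (\<alpha> + k) choose k" using k by (simp add: binomial_Suc_Suc)
    also have "\<dots> = (\<alpha> + k) choose \<alpha>" by (rule binomial_add_symmetric[symmetric])
    finally have "z < (\<alpha> + k) choose \<alpha>" using z by simp
    then show ?thesis using split k colayer_eq_0[of z \<alpha> k] layer_eq_0[of n k] by simp
  qed
qed

lemma layer_colayer_duality_high:
  assumes "0 < k" and "k \<le> Suc n"
    and low: "(Suc a + n) choose n < z" and z: "z \<le> (Suc a + Suc n) choose Suc n"
    and IH: "\<And>z'. 0 < a \<Longrightarrow> z' \<le> (a + Suc n) choose Suc n \<Longrightarrow>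
      layer k (Suc n) (((a + Suc n) choose Suc n) - z') + colayer k a z'
        = (a + Suc n - k) choose (Suc n - k)"
  shows "layer k (Suc n) (((Suc a + Suc n) choose Suc n) - z) + colayer k (Suc a) z
    = (Suc a + Suc n - k) choose (Suc n - k)"
proof (cases "a = 0")
  case True
  then have "z = Suc (Suc n)" using low z by simp
  moreover have "Suc (Suc n) - k = Suc (Suc n - k)" using assms(2) by simp
  ultimately show ?thesis using True by (simp add: colayer_1)
next
  case False
  define L where "L = (Suc a + n) choose n"
  define z' where "z' = z - L"
  define t where "t = Suc n - k"
  have N: "(Suc a + Suc n) choose Suc n = L + ((a + Suc n) choose Suc n)"
    unfolding L_def by (simp add: binomial_Suc_Suc)
  have L_alt: "L = (a + Suc n) choose Suc a"
    unfolding L_def using binomial_add_symmetric[of "Suc a" n] by simp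
  have "L < z" using low unfolding L_def .
  then have z': "z = L + z'" "z' \<le> (a + Suc n) choose Suc n"
    using z N unfolding z'_def by linarith+
  then have "z' \<le> (a + Suc n) choose a" using binomial_add_symmetric[of a "Suc n"] by simp
  then have "colayer k (Suc a) z = ((a + Suc n - k) choose Suc a) + colayer k a z'"
    unfolding z'(1) L_alt using False by (subst colayer_split) simp_all
  moreover have "((Suc a + Suc n) choose Suc n) - z = ((a + Suc n) choose Suc n) - z'"
    using N z'(1) by simp
  ultimately have "layer k (Suc n) (((Suc a + Suc n) choose Suc n) - z) + colayer k (Suc a) z
      = ((a + Suc n - k) choose (Suc n - k)) + ((a + Suc n - k) choose Suc a)"
    using IH[OF _ z'(2)] False by simp
  also have "\<dots> = (Suc a + Suc n - k) choose (Suc n - k)"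
  proof -
    have "a + Suc n - k = a + t" and "Suc a + Suc n - k = Suc a + t"
      unfolding t_def using assms(2) by simp_all
    then show ?thesis using binomial_add_plus_choose_Suc[of a t] unfolding t_def by simp
  qed
  finally show ?thesis .
qed

lemma layer_colayer_duality:
  assumes "0 < k" and "k \<le> n" and "0 < \<alpha>" and "z \<le> (\<alpha> + n) choose n"
  shows "layer k n (((\<alpha> + n) choose n) - z) + colayer k \<alpha> z = (\<alpha> + n - k) choose (n - k)"
  using assms
proof (induction "\<alpha> + n" arbitrary: \<alpha> n z rule: less_induct)
  case less
  then obtain n' where n: "n = Suc n'" by (cases n) auto
  show ?case
  proof (cases "z \<le> (\<alpha> + n') choose n'")
    case True
    show ?thesis unfolding n
      by (rule layer_colayer_duality_low) (use less n True in simp_all)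
  next
    case False
    obtain a where a: "\<alpha> = Suc a" using less.prems(3) by (cases \<alpha>) auto
    show ?thesis unfolding n a
    proof (rule layer_colayer_duality_high)
      fix z' assume "0 < a" and "z' \<le> (a + Suc n') choose Suc n'"
      then show "layer k (Suc n') (((a + Suc n') choose Suc n') - z') + colayer k a z'
          = (a + Suc n' - k) choose (Suc n' - k)"
        by (intro less.hyps) (use less.prems n a in simp_all)
    qed (use less.prems n a False in simp_all)
  qed
qed

section \<open>Subadditivity of layers\<close>

definition subadditive_upto :: "nat \<Rightarrow> (nat \<Rightarrow> nat) \<Rightarrow> bool" where
  "subadditive_upto B g \<longleftrightarrow> (\<forall>x y. x + y \<le> B \<longrightarrow> g (x + y) \<le> g x + g y)"

definition superadditive_upto :: "nat \<Rightarrow> (nat \<Rightarrow> nat) \<Rightarrow> bool" where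
  "superadditive_upto B g \<longleftrightarrow> (\<forall>x y. x + y \<le> B \<longrightarrow> g x + g y \<le> g (x + y))"

lemma subadditive_uptoI:
  assumes "\<And>x y. y \<le> x \<Longrightarrow> x + y \<le> B \<Longrightarrow> g (x + y) \<le> g x + g y"
  shows "subadditive_upto B g"
  unfolding subadditive_upto_def by (metis add.commute assms nat_le_linear)

lemma superadditive_uptoI:
  assumes "\<And>x y. y \<le> x \<Longrightarrow> x + y \<le> B \<Longrightarrow> g x + g y \<le> g (x + y)"
  shows "superadditive_upto B g"
  unfolding superadditive_upto_def by (metis add.commute assms nat_le_linear)

lemma subadditive_upto_1: "g 0 = 0 \<Longrightarrow> subadditive_upto 1 g"
  and superadditive_upto_1: "g 0 = 0 \<Longrightarrow> superadditive_upto 1 g"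
proof -
  have "x = 0 \<or> y = 0" if "x + y \<le> 1" for x y :: nat using that by arith
  then show "g 0 = 0 \<Longrightarrow> subadditive_upto 1 g" and "g 0 = 0 \<Longrightarrow> superadditive_upto 1 g"
    unfolding subadditive_upto_def superadditive_upto_def by fastforce+
qed

lemma layer_box:
  assumes "0 < k" and "k \<le> n" and "0 < \<alpha>"
    and sup: "superadditive_upto ((\<alpha> + n) choose n) (colayer k \<alpha>)"
    and "x \<le> (\<alpha> + n) choose n" and "y \<le> (\<alpha> + n) choose n" and "x + y = ((\<alpha> + n) choose n) + s"
  shows "layer k n ((\<alpha> + n) choose n) + layer k n s \<le> layer k n x + layer k n y"
proof -
  let ?N = "(\<alpha> + n) choose n"
  note dual = layer_colayer_duality[OF assms(1-3)]
  have sum: "(?N - x) + (?N - y) = ?N - s" using assms(5-7) by linarith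
  then have "colayer k \<alpha> (?N - x) + colayer k \<alpha> (?N - y) \<le> colayer k \<alpha> (?N - s)"
    using sup unfolding superadditive_upto_def by (metis diff_le_self)
  then show ?thesis
    using dual[of 0] dual[of "?N - x"] dual[of "?N - y"] dual[of "?N - s"] assms(5-7) by simp
qed

lemma colayer_box:
  assumes "0 < k" and "0 < \<alpha>"
    and sub: "k \<le> n \<Longrightarrow> subadditive_upto ((\<alpha> + n) choose n) (layer k n)"
    and "x < (\<alpha> + n) choose n" and "y < (\<alpha> + n) choose n" and "x + y = ((\<alpha> + n) choose n) + s"
  shows "colayer k \<alpha> x + colayer k \<alpha> y \<le> colayer k \<alpha> ((\<alpha> + n) choose n) + colayer k \<alpha> s"
proof (cases "k \<le> n")
  case True
  let ?N = "(\<alpha> + n) choose n"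
  note dual = layer_colayer_duality[OF assms(1) True assms(2)]
  have sum: "(?N - x) + (?N - y) = ?N - s" using assms(4-6) by linarith
  then have "layer k n (?N - s) \<le> layer k n (?N - x) + layer k n (?N - y)"
    using sub[OF True] unfolding subadditive_upto_def by (metis diff_le_self)
  then show ?thesis
    using dual[of ?N] dual[of x] dual[of y] dual[of s] assms(4-6) by simp
next
  case False
  have "(\<alpha> + n) choose n \<le> (\<alpha> + k) choose \<alpha>"
    using False binomial_right_mono[of "\<alpha> + n" "\<alpha> + k" \<alpha>] binomial_add_symmetric[of \<alpha> n] by simp
  then have "colayer k \<alpha> x = 0" and "colayer k \<alpha> y = 0"
    using colayer_eq_0 assms(4,5) by (simp_all add: add.commute)
  then show ?thesis by simp
qed

lemma layer_le_layer_Suc: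
  assumes "0 < k" and sub: "subadditive_upto ((\<alpha> + n) choose n) (layer k n)"
  shows "y \<le> (\<alpha> + n) choose n \<Longrightarrow> layer k n y \<le> layer k (Suc n) y"
proof (induction y rule: less_induct)
  case (less y)
  consider "y = 0" | "y = 1" | "1 < y" by linarith
  then show ?case
  proof cases
    case 2
    then show ?thesis
      using layer_choose[of k n n] layer_choose[of k "Suc n" "Suc n"] assms(1) by simp
  next
    case 3
    then obtain m r where m: "Suc n \<le> m" and r: "0 < r" "r \<le> m choose n"
      and y: "y = (m choose Suc n) + r"
      by (rule binomial_decomposition_pos)
    have "layer k n y \<le> layer k n (m choose Suc n) + layer k n r"
      using sub less.prems y unfolding subadditive_upto_def by simp
    also have "\<dots> \<le> layer k (Suc n) (m choose Suc n) + layer k n r"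
      using less.IH[of "m choose Suc n"] less.prems y r by simp
    also have "\<dots> = layer k (Suc n) y"
      using y m r assms(1) by (simp add: layer_choose layer_split)
    finally show ?thesis .
  qed simp
qed

lemma colayer_Suc_le_colayer:
  assumes "0 < k" and "0 < a" and sup: "superadditive_upto ((a + n) choose n) (colayer k a)"
  shows "y \<le> (a + n) choose n \<Longrightarrow> colayer k (Suc a) y \<le> colayer k a y"
proof (induction y rule: less_induct)
  case (less y)
  consider "y = 0" | "y = 1" | "1 < y" by linarith
  then show ?case
  proof cases
    case 2
    then show ?thesis using colayer_choose[of "Suc a" "Suc a" k] assms(1) by (simp add: binomial_eq_0)
  next
    case 3
    then obtain m r where m: "Suc a \<le> m" and r: "0 < r" "r \<le> m choose a"
      and y: "y = (m choose Suc a) + r"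
      by (rule binomial_decomposition_pos)
    have "colayer k (Suc a) y = colayer k (Suc a) (m choose Suc a) + colayer k a r"
      using y m r assms(2) by (simp add: colayer_choose colayer_split)
    also have "\<dots> \<le> colayer k a (m choose Suc a) + colayer k a r"
      using less.IH[of "m choose Suc a"] less.prems y r by simp
    also have "\<dots> \<le> colayer k a y"
      using sup less.prems y unfolding superadditive_upto_def by simp
    finally show ?thesis .
  qed simp
qed

lemma layer_add_le_within_top:
  assumes "0 < k" and sub: "subadditive_upto ((\<alpha> + n) choose n) (layer k n)"
    and "Suc n \<le> m" and "m \<le> \<alpha> + n" and "r + y \<le> m choose n"
  shows "layer k (Suc n) ((m choose Suc n) + r + y)
    \<le> layer k (Suc n) ((m choose Suc n) + r) + layer k (Suc n) y"
proof -
  have "r + y \<le> (\<alpha> + n) choose n"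
    using assms(5) binomial_right_mono[OF assms(4), of n] by linarith
  then have "layer k n (r + y) \<le> layer k n r + layer k n y"
    and "layer k n y \<le> layer k (Suc n) y"
    using sub layer_le_layer_Suc[OF assms(1) sub] unfolding subadditive_upto_def by simp_all
  moreover have "r \<le> m choose n" using assms(5) by simp
  ultimately show ?thesis using assms(1,3,5) by (simp add: add.assoc layer_split)
qed

lemma colayer_add_ge_within_top:
  assumes "0 < k" and "0 < a" and sup: "superadditive_upto ((a + n) choose n) (colayer k a)"
    and "Suc a \<le> m" and "m \<le> a + n" and "r + y \<le> m choose a"
  shows "colayer k (Suc a) ((m choose Suc a) + r) + colayer k (Suc a) y
    \<le> colayer k (Suc a) ((m choose Suc a) + r + y)"
proof -
  have "r + y \<le> (a + n) choose n"
    using assms(6) binomial_right_mono[OF assms(5), of a] binomial_add_symmetric[of a n] by linarith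
  then have "colayer k a r + colayer k a y \<le> colayer k a (r + y)"
    and "colayer k (Suc a) y \<le> colayer k a y"
    using sup colayer_Suc_le_colayer[OF assms(1,2) sup] unfolding superadditive_upto_def by simp_all
  moreover have "r \<le> m choose a" using assms(6) by simp
  ultimately show ?thesis using assms(2,4,6) by (simp add: add.assoc colayer_split)
qed

lemma layer_box_across_top:
  assumes "0 < k" and "k \<le> Suc n" and "Suc n \<le> m"
    and sup: "\<And>\<alpha>'. 0 < \<alpha>' \<Longrightarrow> \<alpha>' < \<alpha> \<Longrightarrow>
      superadditive_upto ((\<alpha>' + Suc n) choose Suc n) (colayer k \<alpha>')"
    and "y \<le> x" and "x < Suc m choose Suc n" and "Suc m choose Suc n < x + y"
    and "x + y \<le> (\<alpha> + Suc n) choose Suc n"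
  shows "layer k (Suc n) (Suc m choose Suc n) + layer k (Suc n) (x + y - (Suc m choose Suc n))
    \<le> layer k (Suc n) x + layer k (Suc n) y"
proof -
  define \<alpha>' where "\<alpha>' = m - n"
  have top: "Suc m choose Suc n = (\<alpha>' + Suc n) choose Suc n"
    using assms(3) unfolding \<alpha>'_def by simp
  have "Suc m choose Suc n < (\<alpha> + Suc n) choose Suc n" using assms(6-8) by linarith
  then have "0 < \<alpha>'" and "\<alpha>' < \<alpha>"
    using assms(3) binomial_less_imp_less unfolding \<alpha>'_def by fastforce+
  then show ?thesis
    unfolding top using assms(5-7) top
    by (intro layer_box[OF assms(1,2) \<open>0 < \<alpha>'\<close> sup]) simp_all
qed

lemma layer_subadditive_step:
  assumes "0 < k" and "k \<le> Suc n"
    and sub: "subadditive_upto ((\<alpha> + n) choose n) (layer k n)"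
    and sup: "\<And>\<alpha>'. 0 < \<alpha>' \<Longrightarrow> \<alpha>' < \<alpha> \<Longrightarrow>
      superadditive_upto ((\<alpha>' + Suc n) choose Suc n) (colayer k \<alpha>')"
  shows "subadditive_upto ((\<alpha> + Suc n) choose Suc n) (layer k (Suc n))"
proof (rule subadditive_uptoI)
  fix x y :: nat
  show "y \<le> x \<Longrightarrow> x + y \<le> (\<alpha> + Suc n) choose Suc n
    \<Longrightarrow> layer k (Suc n) (x + y) \<le> layer k (Suc n) x + layer k (Suc n) y"
  proof (induction y arbitrary: x rule: less_induct)
    case (less y)
    show ?case
    proof (cases "y = 0")
      case False
      then obtain m r where m: "Suc n \<le> m" and r: "r < m choose n" and x: "x = (m choose Suc n) + r"
        using binomial_decomposition[of x n] less.prems(1) by auto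
      have "m choose Suc n < (\<alpha> + Suc n) choose Suc n" using x less.prems(2) False by linarith
      then have "m < \<alpha> + Suc n" by (rule binomial_less_imp_less)
      have "x < Suc m choose Suc n" using x r by (simp add: binomial_Suc_Suc)
      show ?thesis
      proof (cases "x + y \<le> Suc m choose Suc n")
        case True
        then have "r + y \<le> m choose n" using x by (simp add: binomial_Suc_Suc)
        then show ?thesis
          using layer_add_le_within_top[OF assms(1) sub m] \<open>m < \<alpha> + Suc n\<close> x by simp
      next
        case False
        define s where "s = x + y - (Suc m choose Suc n)"
        have "layer k (Suc n) (x + y) \<le> layer k (Suc n) (Suc m choose Suc n) + layer k (Suc n) s"
          using less.IH[of s "Suc m choose Suc n"] less.prems \<open>x < Suc m choose Suc n\<close> False
          unfolding s_def by simp
        also have "\<dots> \<le> layer k (Suc n) x + layer k (Suc n) y"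
          unfolding s_def using False less.prems \<open>x < Suc m choose Suc n\<close>
          by (intro layer_box_across_top[OF assms(1,2) m sup]) simp_all
        finally show ?thesis .
      qed
    qed simp
  qed
qed

lemma colayer_box_across_top:
  assumes "0 < k" and "Suc a \<le> m"
    and sub: "\<And>n'. n' < n \<Longrightarrow> k \<le> n' \<Longrightarrow>
      subadditive_upto ((Suc a + n') choose n') (layer k n')"
    and "y \<le> x" and "x < Suc m choose Suc a" and "Suc m choose Suc a < x + y"
    and "x + y \<le> (Suc a + n) choose n"
  shows "colayer k (Suc a) x + colayer k (Suc a) y
    \<le> colayer k (Suc a) (Suc m choose Suc a) + colayer k (Suc a) (x + y - (Suc m choose Suc a))"
proof -
  define n' where "n' = m - a"
  have top: "Suc m choose Suc a = (Suc a + n') choose n'"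
    using assms(2) binomial_add_symmetric[of "Suc a" n'] unfolding n'_def by simp
  have "Suc m choose Suc a < (Suc a + n) choose Suc a"
    using assms(5-7) binomial_add_symmetric[of "Suc a" n] by linarith
  then have "n' < n"
    using assms(2) binomial_less_imp_less unfolding n'_def by fastforce
  then show ?thesis
    unfolding top using assms(4-6) top
    by (intro colayer_box[OF assms(1) _ sub]) simp_all
qed

lemma colayer_superadditive_step:
  assumes "0 < k" and "0 < a"
    and sup: "superadditive_upto ((a + n) choose n) (colayer k a)"
    and sub: "\<And>n'. n' < n \<Longrightarrow> k \<le> n' \<Longrightarrow>
      subadditive_upto ((Suc a + n') choose n') (layer k n')"
  shows "superadditive_upto ((Suc a + n) choose n) (colayer k (Suc a))"
proof (rule superadditive_uptoI)
  fix x y :: nat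
  show "y \<le> x \<Longrightarrow> x + y \<le> (Suc a + n) choose n
    \<Longrightarrow> colayer k (Suc a) x + colayer k (Suc a) y \<le> colayer k (Suc a) (x + y)"
  proof (induction y arbitrary: x rule: less_induct)
    case (less y)
    show ?case
    proof (cases "y = 0")
      case False
      then obtain m r where m: "Suc a \<le> m" and r: "r < m choose a" and x: "x = (m choose Suc a) + r"
        using binomial_decomposition[of x a] less.prems(1) by auto
      have "m choose Suc a < (Suc a + n) choose Suc a"
        using x less.prems(2) False binomial_add_symmetric[of "Suc a" n] by linarith
      then have "m < Suc a + n" by (rule binomial_less_imp_less)
      have "x < Suc m choose Suc a" using x r by (simp add: binomial_Suc_Suc)
      show ?thesis
      proof (cases "x + y \<le> Suc m choose Suc a")
        case True
        then have "r + y \<le> m choose a" using x by (simp add: binomial_Suc_Suc)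
        then show ?thesis
          using colayer_add_ge_within_top[OF assms(1,2) sup m] \<open>m < Suc a + n\<close> x by simp
      next
        case False
        define s where "s = x + y - (Suc m choose Suc a)"
        have "colayer k (Suc a) x + colayer k (Suc a) y
            \<le> colayer k (Suc a) (Suc m choose Suc a) + colayer k (Suc a) s"
          unfolding s_def using False less.prems \<open>x < Suc m choose Suc a\<close>
          by (intro colayer_box_across_top[OF assms(1) m sub]) simp_all
        also have "\<dots> \<le> colayer k (Suc a) (x + y)"
          using less.IH[of s "Suc m choose Suc a"] less.prems \<open>x < Suc m choose Suc a\<close> False
          unfolding s_def by simp
        finally show ?thesis .
      qed
    qed simp
  qed
qed

lemma layer_subadditive_base:
  assumes "n < k \<or> \<alpha> = 0"
  shows "subadditive_upto ((\<alpha> + n) choose n) (layer k n)"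
  using assms subadditive_upto_1[of "layer k n"]
  by (auto simp: subadditive_upto_def layer_eq_0 One_nat_def)

lemma colayer_superadditive_base:
  assumes "\<alpha> \<le> 1 \<or> n = 0"
  shows "superadditive_upto ((\<alpha> + n) choose n) (colayer k \<alpha>)"
proof -
  consider "\<alpha> = 0" | "\<alpha> = 1" | "n = 0" using assms by linarith
  then show ?thesis
  proof cases
    case 1
    then show ?thesis by (simp add: superadditive_upto_def colayer_def)
  next
    case 2
    then show ?thesis unfolding superadditive_upto_def by (simp add: colayer_1) arith
  next
    case 3
    then show ?thesis using superadditive_upto_1[of "colayer k \<alpha>"] by (simp add: One_nat_def)
  qed
qed

lemma layer_subadditive_colayer_superadditive:
  assumes "0 < k"
  shows "subadditive_upto ((\<alpha> + n) choose n) (layer k n)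
    \<and> superadditive_upto ((\<alpha> + n) choose n) (colayer k \<alpha>)"
proof (induction "\<alpha> + n" arbitrary: \<alpha> n rule: less_induct)
  case less
  have "subadditive_upto ((\<alpha> + n) choose n) (layer k n)"
  proof (cases "n < k \<or> \<alpha> = 0")
    case False
    then obtain n' where n': "n = Suc n'" using assms by (cases n) auto
    show ?thesis unfolding n'
      by (rule layer_subadditive_step[OF assms])
        (use False n' less[of \<alpha> n'] less[of _ "Suc n'"] in simp_all)
  qed (rule layer_subadditive_base)
  moreover have "superadditive_upto ((\<alpha> + n) choose n) (colayer k \<alpha>)"
  proof (cases "\<alpha> \<le> 1 \<or> n = 0")
    case False
    then obtain a where a: "\<alpha> = Suc a" by (cases \<alpha>) auto
    show ?thesis unfolding a
      by (rule colayer_superadditive_step[OF assms])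
        (use False a less[of a n] less[of "Suc a"] in simp_all)
  qed (rule colayer_superadditive_base)
  ultimately show ?case ..
qed

lemma layer_top_add_le:
  assumes "0 < n" and "0 < \<alpha>"
    and "b \<le> (\<alpha> + n) choose n" and "c \<le> (\<alpha> + n) choose n"
    and "((\<alpha> + n) choose n) + a = b + c"
  shows "layer k n ((\<alpha> + n) choose n) + layer k n a \<le> layer k n b + layer k n c"
proof -
  consider "k = 0" | "n < k" | "0 < k" "k \<le> n" by linarith
  then show ?thesis
  proof cases
    case 1
    then show ?thesis using assms by (simp add: layer_0)
  next
    case 2
    then show ?thesis by (simp add: layer_eq_0)
  next
    case 3
    then show ?thesis
      using layer_box[OF 3 assms(2) _ assms(3,4)] assms(5) layer_subadditive_colayer_superadditive
      by simp
  qed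
qed

theorem lemma1p6:
  fixes n a b c \<alpha> :: nat
  assumes "n > 0" and "a > 0" and "b > 0" and "c > 0" and "\<alpha> > 0"
    and "((\<alpha> + n) choose n) + a = b + c"
    and "a < ((\<alpha> + n) choose n)" and "b < ((\<alpha> + n) choose n)" and "c < ((\<alpha> + n) choose n)"
  shows "mac_up n ((\<alpha> + n) choose n) + mac_up n a \<le> mac_up n b + mac_up n c \<and>
         (mac_up n ((\<alpha> + n) choose n) + mac_up n a = mac_up n b + mac_up n c \<longrightarrow>
         mac_up n (mac_up n ((\<alpha> + n) choose n)) + mac_up n (mac_up n a)
           = mac_up n (mac_up n b) + mac_up n (mac_up n c))"
proof -
  let ?N = "(\<alpha> + n) choose n"
  let ?L = "\<lambda>k. layer k n ?N + layer k n a" and ?R = "\<lambda>k. layer k n b + layer k n c"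
  have le: "?L k \<le> ?R k" for k
    using layer_top_add_le[of n \<alpha> b c a k] assms by simp
  have "mac_up n ?N + mac_up n a = sum ?L {..n}" and "mac_up n b + mac_up n c = sum ?R {..n}"
    using assms by (simp_all add: mac_up_eq_sum_layer sum.distrib)
  moreover have "mac_up n (mac_up n ?N) + mac_up n (mac_up n a) = (\<Sum>k\<le>n. Suc k * ?L k)"
    and "mac_up n (mac_up n b) + mac_up n (mac_up n c) = (\<Sum>k\<le>n. Suc k * ?R k)"
    using assms by (simp_all add: mac_up_mac_up_eq_sum_layer sum.distrib distrib_left)
  moreover have "sum ?L {..n} \<le> sum ?R {..n}" using le by (rule sum_mono)
  moreover have "?L k = ?R k" if "sum ?L {..n} = sum ?R {..n}" and "k \<le> n" for k
    using sum_mono_inv[OF that(1)] le that(2) by simp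
  ultimately show ?thesis by simp
qed

end
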